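(* Let $T_3$ be the tree with vertices $w,x,y,z,u_1,a_1,b_1,u_2,a_2,b_2$ and edges $wx,xy,yz,zu_1,u_1a_1,u_1b_1,zu_2,u_2a_2,u_2b_2$. Let $v$ be a vertex of $T_3$, $S$ a $\Delta_S$-star with $\Delta_S\ge 3$, and $G=T_3\rhd_v S$ a graph of order $n$ and maximum degree $\Delta\ge 3$. Then $\gamma^{\rm ID}(G)\le \left(\frac{\Delta-1}{\Delta}\right)n$.
   Context: An identifying code of a graph $G$ is a set $C\subseteq V(G)$ such that every vertex $v$ has $N[v]\cap C\neq\emptyset$ and for all distinct $u,v$, $N[u]\cap C \ne N[v]\cap C$, where $N[v]$ is the closed neighborhood; $\gamma^{\rm ID}(G)$ is its minimum size. A $k$-star is $K_{1,k}$. For a graph $G'$, a vertex $v$ of $G'$ and a star $S$, $G'\rhd_v S$ is the graph obtained from the disjoint union of $G'$ and $S$ by identifying $v$ with a leaf of $S$. *)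

theory Defs
  imports Complex_Main
begin

type_synonym 'a graph = "'a set \<times> 'a set set"

definition verts :: "'a graph \<Rightarrow> 'a set" where "verts G = fst G"
definition edges :: "'a graph \<Rightarrow> 'a set set" where "edges G = snd G"

definition simple_graph :: "'a graph \<Rightarrow> bool" where
  "simple_graph G \<longleftrightarrow> finite (verts G) \<and>
     (\<forall>e\<in>edges G. \<exists>u v. e = {u, v} \<and> u \<noteq> v \<and> u \<in> verts G \<and> v \<in> verts G)"

definition closed_nbhd :: "'a graph \<Rightarrow> 'a \<Rightarrow> 'a set" where
  "closed_nbhd G v = {v} \<union> {u \<in> verts G. {u, v} \<in> edges G}"

definition degree :: "'a graph \<Rightarrow> 'a \<Rightarrow> nat" where
  "degree G v = card {u \<in> verts G. {u, v} \<in> edges G}"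

definition max_degree :: "'a graph \<Rightarrow> nat" where
  "max_degree G = Max (degree G ` verts G)"

definition is_identifying_code :: "'a graph \<Rightarrow> 'a set \<Rightarrow> bool" where
  "is_identifying_code G C \<longleftrightarrow> C \<subseteq> verts G \<and>
     (\<forall>v\<in>verts G. closed_nbhd G v \<inter> C \<noteq> {}) \<and>
     (\<forall>u\<in>verts G. \<forall>v\<in>verts G. u \<noteq> v \<longrightarrow> closed_nbhd G u \<inter> C \<noteq> closed_nbhd G v \<inter> C)"

definition gamma_ID :: "'a graph \<Rightarrow> nat" where
  "gamma_ID G = Min (card ` {C. is_identifying_code G C})"

definition star :: "nat \<Rightarrow> nat graph" where
  "star k = ({0..k}, {{0, i} | i. i \<in> {1..k}})"

text \<open>G' \<rhd>_v S: disjoint union of G' and S, identifying v with a leaf of S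
  (the leaf 1; all leaves are symmetric).\<close>
definition glue_map :: "'a \<Rightarrow> 'a + nat \<Rightarrow> 'a + nat" where
  "glue_map v p = (if p = Inr 1 then Inl v else p)"

definition attach_star :: "'a graph \<Rightarrow> 'a \<Rightarrow> nat graph \<Rightarrow> ('a + nat) graph" where
  "attach_star G' v S =
     (glue_map v ` (Inl ` verts G' \<union> Inr ` verts S),
      (\<lambda>e. glue_map v ` e) ` ((\<lambda>e. Inl ` e) ` edges G' \<union> (\<lambda>e. Inr ` e) ` edges S))"

datatype t3v = W | X | Y | Z | U1 | A1 | B1 | U2 | A2 | B2

definition T3 :: "t3v graph" where
  "T3 = (UNIV,
     {{W, X}, {X, Y}, {Y, Z}, {Z, U1}, {U1, A1}, {U1, B1}, {Z, U2}, {U2, A2}, {U2, B2}})"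

end

(* If D is a set of vertices of T3 that contains v and dominates and separates all other
   vertices of T3, then D together with the centre of the star and all its leaves except
   one is an identifying code of G: the centre is seen exactly by v and by the star, and
   the leaves in the code tell the star vertices apart. Such a D exists with |D| = 6
   (|D| = 7 for v = z), so gamma_ID(G) <= |D| + k - 1 = n - (11 - |D|). Since n = k + 10,
   Delta >= k and Delta >= 3 (Delta >= 4 for v = z, whose degree rises to 4), we have
   n <= (11 - |D|) Delta, which turns the bound into (1 - 1/Delta) n. *)

theory Submission
  imports Defs
begin

definition neighbours :: "'a graph \<Rightarrow> 'a \<Rightarrow> 'a set" where
  "neighbours G x = {u \<in> verts G. {u, x} \<in> edges G}"

lemma closed_nbhd_eq_insert_neighbours: "closed_nbhd G x = insert x (neighbours G x)"
  by (auto simp: closed_nbhd_def neighbours_def)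

lemma degree_eq_card_neighbours: "degree G x = card (neighbours G x)"
  by (simp add: degree_def neighbours_def)

lemma Inr_notin_image_Inl [simp]: "Inr b \<notin> Inl ` A"
  by auto

lemma Inl_notin_image_Inr [simp]: "Inl a \<notin> Inr ` B"
  by auto

lemma doubleton_eq_image_Inl:
  "{a, b} = Inl ` e \<longleftrightarrow> (\<exists>s t. a = Inl s \<and> b = Inl t \<and> e = {s, t})"
proof
  assume e: "{a, b} = Inl ` e"
  then obtain s t where st: "a = Inl s" "b = Inl t"
    by (metis imageE insertI1 insertI2)
  then have "Inl ` {s, t} = {a, b}"
    by simp
  then have "{s, t} = e"
    using e by (simp only: inj_image_eq_iff[OF inj_Inl])
  with st show "\<exists>s t. a = Inl s \<and> b = Inl t \<and> e = {s, t}"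
    by blast
qed auto

lemma gamma_ID_le_card:
  assumes "finite (verts G)" and "is_identifying_code G C"
  shows "gamma_ID G \<le> card C"
  unfolding gamma_ID_def
proof (rule Min_le)
  have "{C. is_identifying_code G C} \<subseteq> Pow (verts G)"
    by (auto simp: is_identifying_code_def)
  with assms(1) show "finite (card ` {C. is_identifying_code G C})"
    by (meson finite_Pow_iff finite_imageI finite_subset)
qed (use assms(2) in blast)

lemma degree_le_max_degree:
  "finite (verts G) \<Longrightarrow> x \<in> verts G \<Longrightarrow> degree G x \<le> max_degree G"
  unfolding max_degree_def by simp

definition identifies_except :: "'a graph \<Rightarrow> 'a \<Rightarrow> 'a set \<Rightarrow> bool" where
  "identifies_except G v D \<longleftrightarrow> D \<subseteq> verts G \<and> v \<in> D \<and>
     (\<forall>t\<in>verts G - {v}. closed_nbhd G t \<inter> D \<noteq> {}) \<and>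
     (\<forall>t\<in>verts G - {v}. \<forall>t'\<in>verts G - {v}.
        t \<noteq> t' \<longrightarrow> closed_nbhd G t \<inter> D \<noteq> closed_nbhd G t' \<inter> D)"

context
  fixes G' :: "'a graph" and v :: 'a and k :: nat
  assumes v_vert: "v \<in> verts G'" and k_pos: "1 \<le> k"
begin

lemma verts_attach_star:
  "verts (attach_star G' v (star k)) = verts G' <+> insert 0 {2..k}"
  using v_vert k_pos
  by (auto simp: attach_star_def verts_def star_def glue_map_def image_iff Plus_def)

lemma edges_attach_star:
  "edges (attach_star G' v (star k)) =
     (\<lambda>e. Inl ` e) ` edges G' \<union> insert {Inr 0, Inl v} ((\<lambda>i. {Inr 0, Inr i}) ` {2..k})"
proof -
  have glue: "glue_map v (Inl x) = Inl x" "glue_map v (Inr 0) = Inr 0"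
    "glue_map v (Inr (Suc 0)) = Inl v" "2 \<le> i \<Longrightarrow> glue_map v (Inr i) = Inr i" for x i
    by (simp_all add: glue_map_def)
  have "edges (star k) = (\<lambda>i. {0, i}) ` insert 1 {2..k}"
    using k_pos by (auto simp: star_def edges_def)
  then show ?thesis
    by (simp add: attach_star_def edges_def image_Un image_image glue cong: image_cong_simp)
qed

lemma neighbours_attach_star_Inl:
  "neighbours (attach_star G' v (star k)) (Inl t) =
    Inl ` neighbours G' t \<union> (if t = v then {Inr 0} else {})"
  using v_vert unfolding neighbours_def verts_attach_star Plus_def edges_attach_star
  by (auto simp: doubleton_eq_iff image_iff doubleton_eq_image_Inl)

lemma neighbours_attach_star_centre:
  "neighbours (attach_star G' v (star k)) (Inr 0) = insert (Inl v) (Inr ` {2..k})"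
  using v_vert unfolding neighbours_def verts_attach_star Plus_def edges_attach_star
  by (auto simp: doubleton_eq_iff image_iff doubleton_eq_image_Inl)

lemma neighbours_attach_star_leaf:
  "i \<in> {2..k} \<Longrightarrow> neighbours (attach_star G' v (star k)) (Inr i) = {Inr 0}"
  unfolding neighbours_def verts_attach_star Plus_def edges_attach_star
  by (auto simp: doubleton_eq_iff image_iff doubleton_eq_image_Inl)

lemma finite_verts_attach_star:
  "finite (verts G') \<Longrightarrow> finite (verts (attach_star G' v (star k)))"
  by (simp add: verts_attach_star)

lemma card_verts_attach_star:
  "finite (verts G') \<Longrightarrow> card (verts (attach_star G' v (star k))) = card (verts G') + k"
  using k_pos by (simp add: verts_attach_star card_Plus)

lemma degree_attach_star_centre: "degree (attach_star G' v (star k)) (Inr 0) = k"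
  using k_pos by (simp add: degree_eq_card_neighbours neighbours_attach_star_centre card_image)

lemma degree_attach_star_glued:
  assumes "finite (verts G')"
  shows "degree (attach_star G' v (star k)) (Inl v) = Suc (degree G' v)"
proof -
  have "finite (neighbours G' v)"
    using assms by (simp add: neighbours_def)
  then show ?thesis
    by (simp add: degree_eq_card_neighbours neighbours_attach_star_Inl card_image)
qed

lemma max_degree_attach_star_ge:
  assumes "finite (verts G')"
  shows "max k (Suc (degree G' v)) \<le> max_degree (attach_star G' v (star k))"
proof -
  have "degree (attach_star G' v (star k)) (Inr 0) \<le> max_degree (attach_star G' v (star k))"
    and "degree (attach_star G' v (star k)) (Inl v) \<le> max_degree (attach_star G' v (star k))"
    using v_vert
    by (auto intro!: degree_le_max_degree finite_verts_attach_star assms simp: verts_attach_star)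
  then show ?thesis
    by (simp add: degree_attach_star_centre degree_attach_star_glued[OF assms])
qed

lemma identifying_code_attach_star:
  assumes D: "identifies_except G' v D" and k: "3 \<le> k"
  shows "is_identifying_code (attach_star G' v (star k)) (D <+> insert 0 {3..k})"
proof -
  let ?G = "attach_star G' v (star k)" and ?C = "D <+> insert 0 {3..k}"
  define trace where "trace x = closed_nbhd ?G x \<inter> ?C" for x
  have trace_Inl:
    "trace (Inl t) = Inl ` (closed_nbhd G' t \<inter> D) \<union> (if t = v then {Inr 0} else {})" for t
    by (auto simp: trace_def Plus_def closed_nbhd_eq_insert_neighbours neighbours_attach_star_Inl)
  have trace_centre: "trace (Inr 0) = insert (Inr 0) (insert (Inl v) (Inr ` {3..k}))"
    using D by (auto simp: trace_def Plus_def closed_nbhd_eq_insert_neighbours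
        neighbours_attach_star_centre identifies_except_def)
  have trace_leaf: "trace (Inr i) = insert (Inr 0) (if 3 \<le> i then {Inr i} else {})"
    if "i \<in> {2..k}" for i
    using that by (auto simp: trace_def Plus_def closed_nbhd_eq_insert_neighbours neighbours_attach_star_leaf)
  have trace_inner: "trace (Inl t) = Inl ` (closed_nbhd G' t \<inter> D)" if "t \<noteq> v" for t
    using that by (simp add: trace_Inl)
  let ?outer = "insert (Inl v) (Inr ` insert 0 {2..k})"
  have Inr0_notin_inner: "Inr 0 \<notin> trace (Inl t)" if "t \<noteq> v" for t
    using that by (auto simp: trace_inner)
  have Inr0_in_outer: "Inr 0 \<in> trace x" if "x \<in> ?outer" for x
    using that by (auto simp: trace_Inl trace_centre trace_leaf)
  have outer_traces_differ: "trace x \<noteq> trace y"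
    if "x \<in> ?outer" "y \<in> ?outer" "x \<noteq> y" for x y
  proof -
    \<comment> \<open>Away from the copy of G' - v, a trace is determined by whether it contains v and
      by the leaves of index at least 3 that it contains.\<close>
    define seen where "seen x = (Inl v \<in> trace x, trace x \<inter> Inr ` {3..k})" for x
    have "v \<in> closed_nbhd G' v \<inter> D"
      using D by (simp add: closed_nbhd_def identifies_except_def)
    then have "seen (Inl v) = (True, {})"
      by (auto simp: seen_def trace_Inl)
    moreover have "seen (Inr 0) = (True, Inr ` {3..k})"
      by (auto simp: seen_def trace_centre)
    moreover have "seen (Inr i) = (False, if 3 \<le> i then {Inr i} else {})" if "i \<in> {2..k}" for i
      using that by (auto simp: seen_def trace_leaf)
    ultimately have "seen x \<noteq> seen y"
      using that k by (auto split: if_splits)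
    then show ?thesis
      by (auto simp: seen_def)
  qed
  have inner_traces_differ: "trace (Inl t) \<noteq> trace (Inl t')"
    if "t \<in> verts G' - {v}" "t' \<in> verts G' - {v}" "t \<noteq> t'" for t t'
  proof -
    have "closed_nbhd G' t \<inter> D \<noteq> closed_nbhd G' t' \<inter> D"
      using that D unfolding identifies_except_def by blast
    with that show ?thesis
      by (simp add: trace_inner inj_image_eq_iff)
  qed
  have verts_split: "verts ?G = Inl ` (verts G' - {v}) \<union> ?outer"
    using v_vert by (auto simp: verts_attach_star)
  have Inr0_in_trace_iff: "Inr 0 \<in> trace x \<longleftrightarrow> x \<in> ?outer" if "x \<in> verts ?G" for x
    using that Inr0_notin_inner Inr0_in_outer unfolding verts_split by blast
  have traces_differ: "trace x \<noteq> trace y" if "x \<in> verts ?G" "y \<in> verts ?G" "x \<noteq> y" for x y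
  proof (cases "x \<in> ?outer"; cases "y \<in> ?outer")
    assume "x \<notin> ?outer" "y \<notin> ?outer"
    with that obtain t t'
      where "x = Inl t" "y = Inl t'" "t \<in> verts G' - {v}" "t' \<in> verts G' - {v}"
      unfolding verts_split by blast
    with that(3) show ?thesis
      using inner_traces_differ by blast
  qed (use that outer_traces_differ Inr0_in_trace_iff in metis)+
  have traces_nonempty: "trace x \<noteq> {}" if "x \<in> verts ?G" for x
  proof (cases "x \<in> ?outer")
    case True
    then show ?thesis
      using Inr0_in_outer by blast
  next
    case False
    with that obtain t where "x = Inl t" "t \<in> verts G' - {v}"
      unfolding verts_split by blast
    with D show ?thesis
      by (auto simp: trace_inner identifies_except_def)
  qed
  have "?C \<subseteq> verts ?G"
    using D k by (auto simp: verts_attach_star identifies_except_def)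
  with traces_nonempty traces_differ show ?thesis
    unfolding is_identifying_code_def trace_def by blast
qed

lemma gamma_ID_attach_star_le:
  assumes "finite (verts G')" and "identifies_except G' v D" and "3 \<le> k"
  shows "gamma_ID (attach_star G' v (star k)) \<le> card D + k - 1"
proof -
  have "finite D"
    using assms(1,2) finite_subset by (auto simp: identifies_except_def)
  then have "card (D <+> insert 0 {3..k}) = card D + k - 1"
    using assms(3) by (simp add: card_Plus)
  with assms show ?thesis
    using gamma_ID_le_card[OF finite_verts_attach_star identifying_code_attach_star] by metis
qed

end

lemma real_le_pred_div_mult:
  fixes c m n d :: nat
  assumes "c + m \<le> n" and "n \<le> m * d" and "0 < d"
  shows "real c \<le> (real d - 1) / real d * real n"
proof -
  have "real n \<le> real m * real d"
    using assms(2) by (metis of_nat_le_iff of_nat_mult)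
  then have "real n / real d \<le> real m"
    using assms(3) by (simp add: divide_le_eq)
  moreover have "(real d - 1) / real d * real n = real n - real n / real d"
    using assms(3) by (simp add: field_simps)
  ultimately show ?thesis
    using assms(1) by linarith
qed

lemma UNIV_t3v: "(UNIV :: t3v set) = {W, X, Y, Z, U1, A1, B1, U2, A2, B2}"
  using t3v.exhaust by auto

lemma finite_t3v: "finite (UNIV :: t3v set)"
  by (simp add: UNIV_t3v)

lemma t3v_set_eq_iff:
  "A = B \<longleftrightarrow> (\<forall>x\<in>{W, X, Y, Z, U1, A1, B1, U2, A2, B2}. x \<in> A \<longleftrightarrow> x \<in> B)"
  for A B :: "t3v set"
  by (auto simp flip: UNIV_t3v)

lemma verts_T3: "verts T3 = UNIV"
  by (simp add: T3_def verts_def)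

lemma closed_nbhd_T3:
  "closed_nbhd T3 W = {W, X}" "closed_nbhd T3 X = {W, X, Y}" "closed_nbhd T3 Y = {X, Y, Z}"
  "closed_nbhd T3 Z = {Y, Z, U1, U2}" "closed_nbhd T3 U1 = {Z, U1, A1, B1}"
  "closed_nbhd T3 A1 = {U1, A1}" "closed_nbhd T3 B1 = {U1, B1}"
  "closed_nbhd T3 U2 = {Z, U2, A2, B2}" "closed_nbhd T3 A2 = {U2, A2}" "closed_nbhd T3 B2 = {U2, B2}"
  by (auto simp: closed_nbhd_def T3_def verts_def edges_def doubleton_eq_iff)

primrec T3_code :: "t3v \<Rightarrow> t3v set" where
  "T3_code W = {W, Z, U1, U2, A1, A2}"
| "T3_code X = {X, Y, A1, B1, A2, B2}"
| "T3_code Y = {W, Y, A1, B1, A2, B2}"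
| "T3_code Z = {W, Y, Z, U1, U2, A1, A2}"
| "T3_code U1 = {W, Y, U1, A1, A2, B2}"
| "T3_code A1 = {W, Y, U1, A1, A2, B2}"
| "T3_code B1 = {W, Y, U1, B1, A2, B2}"
| "T3_code U2 = {W, Y, U2, A2, A1, B1}"
| "T3_code A2 = {W, Y, U2, A2, A1, B1}"
| "T3_code B2 = {W, Y, U2, B2, A1, B1}"

lemma identifies_except_T3_code: "identifies_except T3 v (T3_code v)"
  by (cases v) (simp_all add: identifies_except_def verts_T3 UNIV_t3v closed_nbhd_T3
      t3v_set_eq_iff insert_Diff_if)

lemma card_T3_code: "card (T3_code v) = (if v = Z then 7 else 6)"
  by (cases v) simp_all

lemma card_verts_T3: "card (verts T3) = 10"
  by (simp add: verts_T3 UNIV_t3v)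

lemma degree_T3_Z: "degree T3 Z = 3"
proof -
  have "{u \<in> verts T3. {u, Z} \<in> edges T3} = {Y, U1, U2}"
    by (auto simp: T3_def verts_def edges_def doubleton_eq_iff)
  then show ?thesis
    by (simp add: degree_def)
qed

theorem mainTheorem11:
  fixes v :: t3v and k n \<Delta> :: nat and G :: "(t3v + nat) graph"
  assumes "k \<ge> 3"
    and "G = attach_star T3 v (star k)"
    and "n = card (verts G)"
    and "\<Delta> = max_degree G"
    and "\<Delta> \<ge> 3"
  shows "real (gamma_ID G) \<le> ((real \<Delta> - 1) / real \<Delta>) * real n"
proof -
  let ?m = "if v = Z then 4 else 5 :: nat"
  have v: "v \<in> verts T3" and fin: "finite (verts T3)" and k: "1 \<le> k"
    using assms(1) by (simp_all add: verts_T3 finite_t3v)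
  have "gamma_ID G \<le> card (T3_code v) + k - 1"
    using gamma_ID_attach_star_le[OF v k fin identifies_except_T3_code assms(1)] assms(2) by simp
  moreover have n: "n = k + 10"
    using card_verts_attach_star[OF v k fin] assms(2,3) card_verts_T3 by simp
  ultimately have "gamma_ID G + ?m \<le> n"
    using k by (simp add: card_T3_code split: if_split_asm)
  moreover have "k \<le> \<Delta>" and "Suc (degree T3 v) \<le> \<Delta>"
    using max_degree_attach_star_ge[OF v k fin] assms(2,4) by simp_all
  then have "n \<le> ?m * \<Delta>"
    using n assms(5) degree_T3_Z by auto
  ultimately show ?thesis
    using assms(5) by (intro real_le_pred_div_mult) auto
qed

end
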